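(* In the configuration described in the context, let $R_1=\delta r_1^2$ and $R_2=\delta r_2^2$ where $\delta,r_1,r_2,r_3$ are positive integers with $\gcd(r_1,r_2)=1$, $r_1>r_2$ and $r_1^2+r_2^2=r_3^2$. Then all of the lengths $T_1T_2$, $C_1M$, $C_2M$, $T_1I$, $T_2I$, $C_1M_1$, $C_2M_2$, $M_1M$, $M_2M$, $IM$, $C_2K$, $T_2K$, $C_1K$, $T_1K$ are integers if and only if $r_3(r_1^2-r_2^2)$ divides $\delta$, i.e. $\delta = t\,r_3(r_1^2-r_2^2)$ for a positive integer $t$, so that $R_1 = t r_3 r_1^2(r_1^2-r_2^2)$ and $R_2 = t r_3 r_2^2 (r_1^2-r_2^2)$. In that case $T_1T_2 = 2tr_1r_2r_3(r_1^2-r_2^2)$, $C_1M = tr_1r_3^2(r_1^2-r_2^2)$, $C_2M = tr_2r_3^2(r_1^2-r_2^2)$, $T_1I = 2tr_2r_1^2(r_1^2-r_2^2)$, $T_2I = 2tr_1r_2^2(r_1^2-r_2^2)$, $C_1M_1 = tr_1^3(r_1^2-r_2^2)$, $C_2M_2 = tr_2^3(r_1^2-r_2^2)$, $M_1M = tr_1r_2^2(r_1^2-r_2^2)$, $M_2M = tr_2r_1^2(r_1^2-r_2^2)$, $IM=T_1M=T_2M = tr_1r_2r_3(r_1^2-r_2^2)$, $C_2K = tr_2^2r_3^3$, $T_2K = 2tr_1r_3r_2^3$, $C_1K = tr_1^2r_3^3$, $T_1K = 2tr_2r_3r_1^3$; consequently the right triangles $C_1T_1M_1$, $C_1IM_1$,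 $C_2T_2M_2$, $C_2IM_2$, $T_1M_1M$, $MM_1I$, $IM_2M$, $MM_2T_2$, $C_1T_1M$, $C_1IM$, $C_2T_2M$, $C_2IM$, $C_1MC_2$, $T_1IT_2$, $C_2T_2K$, $C_1T_1K$ all have integer side lengths.
   Context: Configuration: two circles in the plane with centers $C_1,C_2$ and radii $R_1>R_2>0$, externally tangent at the point $I$ (so $I$ lies on segment $C_1C_2$ and $C_1C_2=R_1+R_2$). Let a common external tangent line touch the first circle at $T_1$ and the second circle at $T_2$ (both circles on the same side of line $T_1T_2$). Let $M$ be the midpoint of segment $T_1T_2$; equivalently, $M$ is the point where the common tangent line at $I$ (the line through $I$ perpendicular to $C_1C_2$) meets $T_1T_2$. Let $M_1$ be the midpoint of segment $T_1I$ (which is the intersection point of segment $C_1M$ with $T_1I$, the foot of the perpendicular from $C_1$ to $T_1I$), and $M_2$ the midpoint of segment $T_2I$ (the intersection of $C_2M$ with $T_2I$). Since $R_1>R_2$, the lines $T_1T_2$ and $C_1C_2$ meet at a point $K$, lying beyond $C_2$ on ray $C_1C_2$ and beyond $T_2$ on ray $T_1T_2$. For points $X,Y$, $XY$ denotes the length of segment $\overline{XY}$. *)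

theory Defs
  imports "HOL-Analysis.Analysis"
begin

end

theory Submission
  imports Defs
begin

(* With origin T1, the vectors C1 - T1 and T2 - T1 are orthogonal, of lengths R1 and
   2 sqrt (R1 R2), and every point of the figure has rational coordinates in this frame:
   C2 = (R2/R1, 1), I = (2 R2, R1)/(R1 + R2), K = (0, R1/(R1 - R2)), and the midpoints
   by averaging. Writing R1 = d a^2, R2 = d b^2 with a^2 + b^2 = c^2, every length is d times
   a rational function of a, b, c with denominator dividing c (a^2 - b^2); for instance
   C1M1 = d a^3 / c and C1K = d a^2 c^2 / (a^2 - b^2). For a primitive triple (r1, r2, r3)
   the numbers r3 and r1^2 - r2^2 are coprime to r1 and to each other, so these two lengths
   are integers only if r3 (r1^2 - r2^2) divides delta, and then all lengths are integers. *)

lemma inner_square_eq_of_common_normal: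
  fixes u v w :: "real ^ 2"
  assumes "u \<bullet> w = 0" "v \<bullet> w = 0" "w \<noteq> 0"
  shows "(u \<bullet> v)^2 = (u \<bullet> u) * (v \<bullet> v)"
proof -
  have "w$1 \<noteq> 0 \<or> w$2 \<noteq> 0" using assms(3) by (auto simp: vec_eq_iff forall_2)
  moreover have "u$1 * w$1 + u$2 * w$2 = 0" "v$1 * w$1 + v$2 * w$2 = 0"
    using assms(1,2) by (simp_all add: inner_vec_def sum_2)
  then have "w$1 * (u$1 * v$2 - u$2 * v$1) = 0" "w$2 * (u$1 * v$2 - u$2 * v$1) = 0"
    by algebra+
  ultimately have "u$1 * v$2 - u$2 * v$1 = 0" by auto
  then show ?thesis by (simp add: inner_vec_def sum_2) algebra
qed

lemma inner_orthogonal_combination: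
  fixes n w :: "'a::real_inner"
  assumes "n \<bullet> w = 0"
  shows "(x *\<^sub>R n + y *\<^sub>R w) \<bullet> (x *\<^sub>R n + y *\<^sub>R w) = x^2 * (n \<bullet> n) + y^2 * (w \<bullet> w)"
  using assms by (simp add: inner_simps inner_commute power2_eq_square algebra_simps)

lemma orthogonal_combination_eq_0:
  fixes n w :: "'a::real_inner"
  assumes "n \<bullet> w = 0" "n \<noteq> 0" "w \<noteq> 0" "x *\<^sub>R n + y *\<^sub>R w = 0"
  shows "x = 0" "y = 0"
proof -
  have "x^2 * (n \<bullet> n) + y^2 * (w \<bullet> w) = 0"
    using inner_orthogonal_combination[OF assms(1), of x y] by (simp add: assms(4))
  moreover have "n \<bullet> n > 0" "w \<bullet> w > 0" using assms(2,3) by simp_all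
  ultimately show "x = 0" "y = 0"
    by (simp_all add: add_nonneg_eq_0_iff)
qed

lemma dist_orthogonal_frame:
  fixes T n w :: "'a::real_inner"
  assumes "n \<bullet> w = 0"
  shows "dist (T + x1 *\<^sub>R n + y1 *\<^sub>R w) (T + x2 *\<^sub>R n + y2 *\<^sub>R w)
           = sqrt ((x1 - x2)^2 * (n \<bullet> n) + (y1 - y2)^2 * (w \<bullet> w))"
proof -
  have "T + x1 *\<^sub>R n + y1 *\<^sub>R w - (T + x2 *\<^sub>R n + y2 *\<^sub>R w) = (x1 - x2) *\<^sub>R n + (y1 - y2) *\<^sub>R w"
    by (simp add: algebra_simps)
  then show ?thesis
    by (simp add: dist_norm norm_eq_sqrt_inner inner_orthogonal_combination[OF assms])
qed

lemma closed_segment_point_at_dist: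
  fixes A B X :: "'a::real_normed_vector"
  assumes "X \<in> closed_segment A B" "A \<noteq> B"
  shows "X = A + (dist A X / dist A B) *\<^sub>R (B - A)"
proof -
  obtain u where u: "0 \<le> u" "X = A + u *\<^sub>R (B - A)"
    using assms(1) by (auto simp: closed_segment_def algebra_simps)
  then have "dist A X = u * dist A B"
    by (simp add: dist_norm norm_minus_commute)
  then show ?thesis using u(2) assms(2) by simp
qed

lemma collinear_3_imp_on_line:
  assumes "collinear {A, B, X}" "A \<noteq> B"
  obtains u where "X = A + u *\<^sub>R (B - A)"
proof -
  obtain p q where "X = p *\<^sub>R A + q *\<^sub>R B" "p + q = 1"
    using collinear_3_imp_in_affine_hull[OF assms] by (auto simp: affine_hull_2)
  then have "X = A + q *\<^sub>R (B - A)" by (simp add: algebra_simps flip: eq_diff_eq)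
  then show thesis by (rule that)
qed

lemma lines_meet_in_orthogonal_frame:
  fixes T n w K :: "'a::real_inner"
  assumes "n \<bullet> w = 0" "n \<noteq> 0" "w \<noteq> 0" "k \<noteq> 1"
    and "collinear {T, T + w, K}" "collinear {T + n, T + k *\<^sub>R n + w, K}"
  shows "K = T + (1 / (1 - k)) *\<^sub>R w"
proof -
  obtain q where q: "K = T + q *\<^sub>R w"
    using collinear_3_imp_on_line[OF assms(5)] assms(3) by auto
  have "T + n \<noteq> T + k *\<^sub>R n + w"
  proof
    assume "T + n = T + k *\<^sub>R n + w"
    then have "(k - 1) *\<^sub>R n + 1 *\<^sub>R w = 0" by (simp add: algebra_simps)
    from orthogonal_combination_eq_0(2)[OF assms(1-3) this] show False by simp
  qed
  with collinear_3_imp_on_line[OF assms(6)] obtain q'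
    where "K = T + n + q' *\<^sub>R (T + k *\<^sub>R n + w - (T + n))"
    by (metis add.assoc)
  then have "(1 + q' * (k - 1)) *\<^sub>R n + (q' - q) *\<^sub>R w = 0"
    by (simp add: q algebra_simps)
  from orthogonal_combination_eq_0[OF assms(1-3) this] assms(4) have "q = 1 / (1 - k)"
    by (simp add: field_simps)
  then show ?thesis by (simp add: q)
qed

lemma primitive_pythagorean_hypotenuse_odd:
  fixes a b c :: nat
  assumes "coprime a b" "a^2 + b^2 = c^2"
  shows "odd c"
proof
  assume "even c"
  then obtain k where k: "c = 2 * k" ..
  have "odd a \<or> odd b"
    using assms(1) coprime_common_divisor[of a b 2] by auto
  moreover have "even (a^2 + b^2)"
    using \<open>even c\<close> assms(2) by simp
  ultimately obtain i j where "a = 2 * i + 1" "b = 2 * j + 1"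
    by (auto elim!: oddE)
  then have "4 * k^2 = 4 * (i^2 + i + j^2 + j) + 2"
    using assms(2) k by (simp add: power2_eq_square algebra_simps)
  then show False by presburger
qed

lemma primitive_pythagorean_coprime:
  fixes a b c :: nat
  assumes ab: "coprime a b" and pyth: "a^2 + b^2 = c^2" and "b < a"
  shows "coprime c a" "coprime (a^2 - b^2) a" "coprime (a^2 - b^2) c"
proof -
  define D where "D = a^2 - b^2"
  have a2: "a^2 = D + b^2" and c2: "c^2 = D + 2 * b^2"
    using \<open>b < a\<close> pyth by (simp_all add: D_def power_strict_mono less_imp_le)
  have "coprime (b^2) (a^2)"
    using ab by (simp add: coprime_commute)
  then have "coprime (c^2) (a^2)"
    by (metis pyth add.commute coprime_iff_gcd_eq_1 gcd_add1)
  then show "coprime c a" by simp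
  have "coprime (a^2) (b^2)"
    using ab by simp
  then have Db: "coprime D (b^2)"
    by (metis a2 coprime_iff_gcd_eq_1 gcd_add1)
  then have "coprime D (a^2)"
    by (metis a2 coprime_iff_gcd_eq_1 gcd_add2)
  then show "coprime (a^2 - b^2) a"
    by (simp add: D_def)
  have "odd (D + 2 * b^2)"
    using primitive_pythagorean_hypotenuse_odd[OF ab pyth] by (simp flip: c2)
  with Db have "coprime D (2 * b^2)"
    by (simp add: coprime_commute)
  then have "coprime D (c^2)"
    by (metis c2 coprime_iff_gcd_eq_1 gcd_add2)
  then show "coprime (a^2 - b^2) c"
    by (simp add: D_def)
qed

lemma of_nat_divide_in_Ints_imp_dvd:
  assumes "real m / real n \<in> \<int>" "0 < n"
  shows "n dvd m"
  using assms of_int_div_of_int_in_Ints_iff[of "int m" "int n", where 'a = real] by simp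

lemma primitive_pythagorean_Ints_imp_dvd:
  fixes \<delta> a b c :: nat
  assumes ab: "coprime a b" and pyth: "a^2 + b^2 = c^2" and "b < a"
    and "real (\<delta> * a^3) / real c \<in> \<int>"
    and "real (\<delta> * (a^2 * c^2)) / real (a^2 - b^2) \<in> \<int>"
  shows "c * (a^2 - b^2) dvd \<delta>"
proof -
  note coprime_facts = primitive_pythagorean_coprime[OF ab pyth \<open>b < a\<close>]
  have "0 < c"
    using pyth \<open>b < a\<close> by (cases "c = 0") auto
  have "b^2 < a^2"
    using \<open>b < a\<close> by (intro power_strict_mono) auto
  then have "0 < a^2 - b^2"
    by arith
  have "c dvd \<delta> * a^3"
    using assms(4) \<open>0 < c\<close> by (rule of_nat_divide_in_Ints_imp_dvd)
  moreover have "a^2 - b^2 dvd \<delta> * (a^2 * c^2)"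
    using assms(5) \<open>0 < a^2 - b^2\<close> by (rule of_nat_divide_in_Ints_imp_dvd)
  ultimately have "c dvd \<delta>" "a^2 - b^2 dvd \<delta>"
    using coprime_facts by (simp_all add: coprime_dvd_mult_left_iff)
  then show ?thesis
    using coprime_facts(3) by (simp add: divides_mult coprime_commute)
qed

locale common_tangent_configuration =
  fixes C1 C2 I T1 T2 M M1 M2 K :: "real ^ 2" and R1 R2 :: real
  assumes radii: "0 < R2" "R2 < R1"
    and centers: "dist C1 C2 = R1 + R2"
    and I_seg: "I \<in> closed_segment C1 C2" and I_dist: "dist C1 I = R1"
    and T1_on: "dist C1 T1 = R1" and T2_on: "dist C2 T2 = R2"
    and T1_tan: "(T2 - T1) \<bullet> (C1 - T1) = 0"
    and T2_tan: "(T1 - T2) \<bullet> (C2 - T2) = 0"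
    and T12_ne: "T1 \<noteq> T2"
    and same_side: "(C1 - T1) \<bullet> (C2 - T2) > 0"
    and M_def: "M = midpoint T1 T2"
    and M1_def: "M1 = midpoint T1 I"
    and M2_def: "M2 = midpoint T2 I"
    and K_T: "collinear {T1, T2, K}" and K_C: "collinear {C1, C2, K}"
begin

lemma tangent_frame:
  shows "(C1 - T1) \<bullet> (T2 - T1) = 0" and "norm (C1 - T1) = R1"
    and "C2 = T1 + (R2 / R1) *\<^sub>R (C1 - T1) + (T2 - T1)"
    and "(T2 - T1) \<bullet> (T2 - T1) = 4 * R1 * R2"
proof -
  define n where "n = C1 - T1"
  define m where "m = C2 - T2"
  define w where "w = T2 - T1"
  have "R1 \<noteq> 0"
    using radii by simp
  show "(C1 - T1) \<bullet> (T2 - T1) = 0" "norm (C1 - T1) = R1"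
    using T1_tan T1_on by (simp_all add: inner_commute dist_norm norm_minus_commute)
  have nw: "n \<bullet> w = 0" and mw: "m \<bullet> w = 0"
    using T1_tan T2_tan by (simp_all add: n_def m_def w_def inner_commute inner_diff_right)
  have norm_n: "norm n = R1" and norm_m: "norm m = R2"
    using T1_on T2_on by (simp_all add: n_def m_def dist_norm norm_minus_commute)
  have "(n \<bullet> m)^2 = (norm n * norm m)^2"
    using inner_square_eq_of_common_normal[OF nw mw] T12_ne
    by (simp add: w_def power_mult_distrib flip: power2_norm_eq_inner)
  then have "n \<bullet> m = norm n * norm m"
    using same_side by (simp add: n_def m_def power2_eq_iff_nonneg)
  then have "R1 *\<^sub>R m = R2 *\<^sub>R n"
    unfolding norm_cauchy_schwarz_eq by (simp only: norm_n norm_m)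
  then have "R1 *\<^sub>R m = R1 *\<^sub>R ((R2 / R1) *\<^sub>R n)"
    using \<open>R1 \<noteq> 0\<close> by simp
  then have "m = (R2 / R1) *\<^sub>R n"
    using \<open>R1 \<noteq> 0\<close> by (metis scaleR_cancel_left)
  then show C2: "C2 = T1 + (R2 / R1) *\<^sub>R (C1 - T1) + (T2 - T1)"
    by (simp add: m_def n_def w_def algebra_simps)
  have "C2 - C1 = (R2 / R1 - 1) *\<^sub>R n + 1 *\<^sub>R w"
    by (simp add: C2 n_def w_def algebra_simps)
  then have "(R1 + R2)^2 = (R2 / R1 - 1)^2 * (n \<bullet> n) + 1^2 * (w \<bullet> w)"
    using centers inner_orthogonal_combination[OF nw]
    by (metis dist_commute dist_norm power2_norm_eq_inner)
  then have "(R1 + R2)^2 = (R2 / R1 - 1)^2 * R1^2 + w \<bullet> w"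
    by (simp add: norm_n flip: power2_norm_eq_inner)
  then show "(T2 - T1) \<bullet> (T2 - T1) = 4 * R1 * R2"
    using \<open>R1 \<noteq> 0\<close> by (simp add: w_def field_simps power2_eq_square)
qed

lemma tangency_point_eq: "I = C1 + (R1 / (R1 + R2)) *\<^sub>R (C2 - C1)"
  using closed_segment_point_at_dist[OF I_seg] centers I_dist radii by fastforce

lemma external_center_eq: "K = T1 + (R1 / (R1 - R2)) *\<^sub>R (T2 - T1)"
proof -
  have "C1 - T1 \<noteq> 0" "T2 - T1 \<noteq> 0" "R2 / R1 \<noteq> 1"
    using tangent_frame(2) radii T12_ne by auto
  moreover have "collinear {T1, T1 + (T2 - T1), K}"
    "collinear {T1 + (C1 - T1), T1 + (R2 / R1) *\<^sub>R (C1 - T1) + (T2 - T1), K}"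
    using K_T K_C by (simp_all flip: tangent_frame(3))
  ultimately have "K = T1 + (1 / (1 - R2 / R1)) *\<^sub>R (T2 - T1)"
    using lines_meet_in_orthogonal_frame tangent_frame(1) by blast
  then show ?thesis using radii by (simp add: field_simps)
qed

(* The scale e is delta / (r3 (r1^2 - r2^2)) of the theorem, in which all lengths are
   polynomials. *)
lemma distances:
  fixes a b c e :: real
  assumes ab: "0 < b" "b < a" and c: "0 < c" "c^2 = a^2 + b^2" and e: "0 < e"
    and R1_eq: "R1 = e * c * (a^2 - b^2) * a^2" and R2_eq: "R2 = e * c * (a^2 - b^2) * b^2"
  shows "dist T1 T2 = 2 * e * a * b * c * (a^2 - b^2)"
    "dist C1 M = e * a * c^2 * (a^2 - b^2)" "dist C2 M = e * b * c^2 * (a^2 - b^2)"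
    "dist T1 I = 2 * e * b * a^2 * (a^2 - b^2)" "dist T2 I = 2 * e * a * b^2 * (a^2 - b^2)"
    "dist C1 M1 = e * a^3 * (a^2 - b^2)" "dist C2 M2 = e * b^3 * (a^2 - b^2)"
    "dist M1 M = e * a * b^2 * (a^2 - b^2)" "dist M2 M = e * b * a^2 * (a^2 - b^2)"
    "dist I M = e * a * b * c * (a^2 - b^2)" "dist T1 M = e * a * b * c * (a^2 - b^2)"
    "dist T2 M = e * a * b * c * (a^2 - b^2)"
    "dist C2 K = e * b^2 * c^3" "dist T2 K = 2 * e * a * c * b^3"
    "dist C1 K = e * a^2 * c^3" "dist T1 K = 2 * e * b * c * a^3"
    "dist T1 M1 = e * b * a^2 * (a^2 - b^2)" "dist I M1 = e * b * a^2 * (a^2 - b^2)"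
    "dist T2 M2 = e * a * b^2 * (a^2 - b^2)" "dist I M2 = e * a * b^2 * (a^2 - b^2)"
    "dist C2 I = e * c * (a^2 - b^2) * b^2"
proof -
  define d where "d = e * c * (a^2 - b^2)"
  have a2b2: "b^2 < a^2" using ab by (simp add: power_strict_mono)
  have d: "0 < d" using e c a2b2 by (simp add: d_def)
  have R1: "R1 = d * a^2" and R2: "R2 = d * b^2" by (simp_all add: R1_eq R2_eq d_def)
  have e_eq: "e = d / (c * (a^2 - b^2))" using c a2b2 by (simp add: d_def)
  define n where "n = C1 - T1"
  define w where "w = T2 - T1"
  define P where "P x y = T1 + x *\<^sub>R n + y *\<^sub>R w" for x y
  have dist_P: "dist (P x1 y1) (P x2 y2) = L"
    if "0 \<le> L" "(x1-x2)^2 * (d*a^2)^2 + (y1-y2)^2 * (2*d*a*b)^2 = L^2" for x1 y1 x2 y2 L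
  proof -
    have "n \<bullet> n = (d*a^2)^2"
      using tangent_frame(2) by (simp add: n_def R1 flip: power2_norm_eq_inner)
    moreover have "w \<bullet> w = (2*d*a*b)^2"
      using tangent_frame(4) unfolding w_def R1 R2 by (simp add: power2_eq_square algebra_simps)
    ultimately show ?thesis
      using dist_orthogonal_frame[OF tangent_frame(1)[folded n_def w_def]] that by (simp add: P_def)
  qed
  have mid_P: "midpoint (P x1 y1) (P x2 y2) = P ((x1+x2)/2) ((y1+y2)/2)" for x1 y1 x2 y2
    by (simp add: P_def midpoint_def vec_eq_iff field_simps)
  have T1: "T1 = P 0 0" and C1: "C1 = P 1 0" and T2: "T2 = P 0 1"
    by (simp_all add: P_def n_def w_def)
  have C2: "C2 = P (b^2/a^2) 1"
    using tangent_frame(3) ab d by (simp add: P_def n_def w_def R1 R2)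
  have line_P: "P x1 y1 + u *\<^sub>R (P x2 y2 - P x1 y1) = P (x1 + u * (x2 - x1)) (y1 + u * (y2 - y1))"
    for x1 y1 x2 y2 u
    by (simp add: P_def algebra_simps)
  have "R1 / (R1 + R2) = a^2 / c^2" using d by (simp add: R1 R2 c(2) flip: distrib_left)
  then have "I = P (1 + (a^2/c^2) * (b^2/a^2 - 1)) (a^2/c^2)"
    using tangency_point_eq by (simp add: C1 C2 line_P)
  also have "1 + (a^2/c^2) * (b^2/a^2 - 1) = 2*b^2/c^2"
    using ab c(1) by (simp add: field_simps) (use c(2) in algebra)
  finally have I: "I = P (2*b^2/c^2) (a^2/c^2)" .
  have "R1 / (R1 - R2) = a^2 / (a^2 - b^2)" using d by (simp add: R1 R2 flip: right_diff_distrib)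
  then have K: "K = P 0 (a^2 / (a^2 - b^2))"
    using external_center_eq by (simp add: T1 T2 line_P)
  show "dist T1 T2 = 2 * e * a * b * c * (a^2 - b^2)"
    "dist C1 M = e * a * c^2 * (a^2 - b^2)" "dist C2 M = e * b * c^2 * (a^2 - b^2)"
    "dist T1 I = 2 * e * b * a^2 * (a^2 - b^2)" "dist T2 I = 2 * e * a * b^2 * (a^2 - b^2)"
    "dist C1 M1 = e * a^3 * (a^2 - b^2)" "dist C2 M2 = e * b^3 * (a^2 - b^2)"
    "dist M1 M = e * a * b^2 * (a^2 - b^2)" "dist M2 M = e * b * a^2 * (a^2 - b^2)"
    "dist I M = e * a * b * c * (a^2 - b^2)" "dist T1 M = e * a * b * c * (a^2 - b^2)"
    "dist T2 M = e * a * b * c * (a^2 - b^2)"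
    "dist C2 K = e * b^2 * c^3" "dist T2 K = 2 * e * a * c * b^3"
    "dist C1 K = e * a^2 * c^3" "dist T1 K = 2 * e * b * c * a^3"
    "dist T1 M1 = e * b * a^2 * (a^2 - b^2)" "dist I M1 = e * b * a^2 * (a^2 - b^2)"
    "dist T2 M2 = e * a * b^2 * (a^2 - b^2)" "dist I M2 = e * a * b^2 * (a^2 - b^2)"
    "dist C2 I = e * c * (a^2 - b^2) * b^2"
    unfolding M_def M1_def M2_def T1 C1 T2 C2 I K mid_P
    using ab c(1) e d a2b2
    by (safe intro!: dist_P)
      (simp_all add: mult_nonneg_nonneg, simp_all add: e_eq field_simps, (use c(2) in algebra)+)
qed

lemma dist_C1_M1_and_C1_K:
  fixes a b c d :: real
  assumes ab: "0 < b" "b < a" and c: "0 < c" "c^2 = a^2 + b^2" and d: "0 < d"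
    and R1: "R1 = d * a^2" and R2: "R2 = d * b^2"
  shows "dist C1 M1 = d * a^3 / c" and "dist C1 K = d * a^2 * c^2 / (a^2 - b^2)"
proof -
  define e where "e = d / (c * (a^2 - b^2))"
  have "0 < a^2 - b^2"
    using ab by (simp add: power_strict_mono)
  then have d_eq: "d = e * c * (a^2 - b^2)" and "0 < e"
    using c d by (simp_all add: e_def)
  then have "R1 = e * c * (a^2 - b^2) * a^2" "R2 = e * c * (a^2 - b^2) * b^2"
    by (simp_all add: R1 R2)
  note lengths = distances(6,15)[OF ab c \<open>0 < e\<close> this]
  show "dist C1 M1 = d * a^3 / c" "dist C1 K = d * a^2 * c^2 / (a^2 - b^2)"
    using c(1) \<open>0 < a^2 - b^2\<close> by (simp_all add: lengths d_eq power3_eq_cube power2_eq_square)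
qed


lemma Ints_dist_C1_M1_C1_K_imp_dvd:
  fixes \<delta> r1 r2 r3 :: nat
  assumes "coprime r1 r2" and pyth: "r1^2 + r2^2 = r3^2" and "0 < r2" "r2 < r1"
    and R1_def: "R1 = real (\<delta> * r1^2)" and R2_def: "R2 = real (\<delta> * r2^2)"
    and "dist C1 M1 \<in> \<int>" "dist C1 K \<in> \<int>"
  shows "r3 * (r1^2 - r2^2) dvd \<delta>"
proof -
  have "0 < real r2" "real r2 < real r1" "0 < real \<delta>"
    using assms(3,4) radii(1) by (simp_all add: R2_def zero_less_mult_iff)
  moreover have "real r3^2 = real r1^2 + real r2^2"
    using pyth by (metis of_nat_add of_nat_power)
  moreover have "0 < real r3"
    using pyth assms(3) by (cases "r3 = 0") auto
  moreover have "r2^2 \<le> r1^2"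
    using assms(4) by (simp add: power_mono)
  ultimately have "dist C1 M1 = real (\<delta> * r1^3) / real r3"
    "dist C1 K = real (\<delta> * (r1^2 * r3^2)) / real (r1^2 - r2^2)"
    using dist_C1_M1_and_C1_K[of "real r2" "real r1" "real r3" "real \<delta>"]
    by (simp_all add: R1_def R2_def of_nat_diff)
  with assms show ?thesis
    using primitive_pythagorean_Ints_imp_dvd by simp
qed

end

theorem mainTheorem4:
  fixes C1 C2 I T1 T2 M M1 M2 K :: "real ^ 2"
    and R1 R2 :: real
    and \<delta> r1 r2 r3 :: nat
  assumes pos: "\<delta> > 0" "r1 > 0" "r2 > 0" "r3 > 0"
    and coprime: "gcd r1 r2 = 1"
    and r12: "r1 > r2"
    and pyth: "r1^2 + r2^2 = r3^2"
    and R1_def: "R1 = real (\<delta> * r1^2)"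
    and R2_def: "R2 = real (\<delta> * r2^2)"
    and centers: "dist C1 C2 = R1 + R2"
    and I_seg: "I \<in> closed_segment C1 C2" and I_dist: "dist C1 I = R1"
    and T1_on: "dist C1 T1 = R1" and T2_on: "dist C2 T2 = R2"
    and T1_tan: "(T2 - T1) \<bullet> (C1 - T1) = 0"
    and T2_tan: "(T1 - T2) \<bullet> (C2 - T2) = 0"
    and T12_ne: "T1 \<noteq> T2"
    and same_side: "(C1 - T1) \<bullet> (C2 - T2) > 0"
    and M_def: "M = midpoint T1 T2"
    and M1_def: "M1 = midpoint T1 I"
    and M2_def: "M2 = midpoint T2 I"
    and K_T: "collinear {T1, T2, K}" and K_C: "collinear {C1, C2, K}"
  shows
   "((dist T1 T2 \<in> \<int> \<and> dist C1 M \<in> \<int> \<and> dist C2 M \<in> \<int> \<and>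
      dist T1 I \<in> \<int> \<and> dist T2 I \<in> \<int> \<and> dist C1 M1 \<in> \<int> \<and>
      dist C2 M2 \<in> \<int> \<and> dist M1 M \<in> \<int> \<and> dist M2 M \<in> \<int> \<and>
      dist I M \<in> \<int> \<and> dist C2 K \<in> \<int> \<and> dist T2 K \<in> \<int> \<and>
      dist C1 K \<in> \<int> \<and> dist T1 K \<in> \<int>)
     \<longleftrightarrow> r3 * (r1^2 - r2^2) dvd \<delta>)
    \<and>
    (\<forall>t::nat. \<delta> = t * r3 * (r1^2 - r2^2) \<longrightarrow>
      R1 = real (t * r3 * r1^2 * (r1^2 - r2^2)) \<and>
      R2 = real (t * r3 * r2^2 * (r1^2 - r2^2)) \<and>
      dist T1 T2 = real (2 * t * r1 * r2 * r3 * (r1^2 - r2^2)) \<and>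
      dist C1 M = real (t * r1 * r3^2 * (r1^2 - r2^2)) \<and>
      dist C2 M = real (t * r2 * r3^2 * (r1^2 - r2^2)) \<and>
      dist T1 I = real (2 * t * r2 * r1^2 * (r1^2 - r2^2)) \<and>
      dist T2 I = real (2 * t * r1 * r2^2 * (r1^2 - r2^2)) \<and>
      dist C1 M1 = real (t * r1^3 * (r1^2 - r2^2)) \<and>
      dist C2 M2 = real (t * r2^3 * (r1^2 - r2^2)) \<and>
      dist M1 M = real (t * r1 * r2^2 * (r1^2 - r2^2)) \<and>
      dist M2 M = real (t * r2 * r1^2 * (r1^2 - r2^2)) \<and>
      dist I M = real (t * r1 * r2 * r3 * (r1^2 - r2^2)) \<and>
      dist T1 M = real (t * r1 * r2 * r3 * (r1^2 - r2^2)) \<and>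
      dist T2 M = real (t * r1 * r2 * r3 * (r1^2 - r2^2)) \<and>
      dist C2 K = real (t * r2^2 * r3^3) \<and>
      dist T2 K = real (2 * t * r1 * r3 * r2^3) \<and>
      dist C1 K = real (t * r1^2 * r3^3) \<and>
      dist T1 K = real (2 * t * r2 * r3 * r1^3) \<and>
      \<comment> \<open>all sides of the listed right triangles are integers\<close>
      (\<forall>d \<in> {dist C1 T1, dist T1 M1, dist C1 M1, dist C1 I, dist I M1,
               dist C2 T2, dist T2 M2, dist C2 M2, dist C2 I, dist I M2,
               dist M1 M, dist T1 M, dist I M, dist M2 M, dist T2 M,
               dist C1 M, dist C2 M, dist C1 C2, dist T1 I, dist T2 I, dist T1 T2,
               dist T2 K, dist C2 K, dist T1 K, dist C1 K}. d \<in> \<int>))"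
proof -
  have radii: "0 < R2" "R2 < R1"
    using pos r12 by (simp_all add: R1_def R2_def power_strict_mono)
  interpret common_tangent_configuration C1 C2 I T1 T2 M M1 M2 K R1 R2
    using radii assms by unfold_locales
  have "coprime r1 r2"
    using coprime by (simp add: coprime_iff_gcd_eq_1)
  let "(?integral \<longleftrightarrow> ?divides) \<and> (\<forall>t. ?multiple t \<longrightarrow> ?lengths t)" = ?thesis
  have lengths: "?lengths t" if "?multiple t" for t
  proof -
    have "real r3^2 = real r1^2 + real r2^2"
      using pyth by (metis of_nat_add of_nat_power)
    moreover have "r2^2 \<le> r1^2"
      using r12 by (simp add: power_mono)
    moreover have "0 < t"
      using that pos by simp
    ultimately show ?thesis
      using distances[of "real r2" "real r1" "real r3" "real t"] that pos r12
      by (simp add: of_nat_diff T1_on I_dist T2_on centers R1_def R2_def)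
  qed
  have "?integral \<longleftrightarrow> ?divides"
  proof
    assume ?integral
    then show ?divides
      using Ints_dist_C1_M1_C1_K_imp_dvd[OF \<open>coprime r1 r2\<close> pyth pos(3) r12 R1_def R2_def] by blast
  next
    assume ?divides
    then obtain t where "?multiple t"
      by (elim dvdE) (metis mult.assoc mult.commute)
    from lengths[OF this] show ?integral
      by simp
  qed
  with lengths show ?thesis
    by blast
qed

end
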